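(* Let $G$ be a twin-free simple graph on vertex set $\{1,\dots,n\}$, and suppose that for some $1\le m\le n$ the set $M=\{1,2,\dots,m\}$ is an identifying code of $G$. Then the lexicographic algorithm (Algorithm 1) applied to $G$ returns an identifying code $C$ with $C\subseteq M$.
   Context: Vertices of $G$ are identified with the integers $1,\dots,n$ and ordered by the usual order. For a vertex $v$, $N(v)=\{v\}\cup\{w : vw\in E(G)\}$ is its closed neighbourhood. A set $C\subseteq V(G)$ is an identifying code if the sets $N(v)\cap C$, $v\in V(G)$, are all nonempty and pairwise distinct. $G$ is twin-free if $N(v)\neq N(w)$ for all distinct vertices $v,w$. The lexicographic algorithm (Algorithm 1): set $C_0=\emptyset$. For $j=1,2,\dots,n$ in turn: (i) if $N(j)\cap C_{j-1}=\emptyset$, set $C_j=C_{j-1}\cup\{\min N(j)\}$; (ii) otherwise, if there exists $k\in\{1,\dots,j-1\}$ with $N(k)\cap C_{j-1}=N(j)\cap C_{j-1}$, let $k$ be the least such index; if $N(j)\neq N(k)$ set $C_j=C_{j-1}\cup\{\min(N(j)\triangle N(k))\}$, while if $N(j)=N(k)$ the algorithm stops immediately and returns "failure"; (iii) otherwise set $C_j=C_{j-1}$. If the algorithm never fails, it returns $C_n$. Here $\triangle$ denotes symmetric difference. *)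

theory Defs
  imports Main
begin

definition simple_graph :: "nat \<Rightarrow> (nat \<Rightarrow> nat \<Rightarrow> bool) \<Rightarrow> bool" where
  "simple_graph n E \<longleftrightarrow>
     (\<forall>v w. E v w \<longrightarrow> E w v) \<and> (\<forall>v. \<not> E v v) \<and>
     (\<forall>v w. E v w \<longrightarrow> v \<in> {1..n} \<and> w \<in> {1..n})"

definition nbh :: "(nat \<Rightarrow> nat \<Rightarrow> bool) \<Rightarrow> nat \<Rightarrow> nat set" where
  "nbh E v = insert v {w. E v w}"

definition twin_free :: "nat \<Rightarrow> (nat \<Rightarrow> nat \<Rightarrow> bool) \<Rightarrow> bool" where
  "twin_free n E \<longleftrightarrow>
     (\<forall>v\<in>{1..n}. \<forall>w\<in>{1..n}. v \<noteq> w \<longrightarrow> nbh E v \<noteq> nbh E w)"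

definition identifying_code :: "nat \<Rightarrow> (nat \<Rightarrow> nat \<Rightarrow> bool) \<Rightarrow> nat set \<Rightarrow> bool" where
  "identifying_code n E C \<longleftrightarrow>
     C \<subseteq> {1..n} \<and>
     (\<forall>v\<in>{1..n}. nbh E v \<inter> C \<noteq> {}) \<and>
     (\<forall>v\<in>{1..n}. \<forall>w\<in>{1..n}. v \<noteq> w \<longrightarrow> nbh E v \<inter> C \<noteq> nbh E w \<inter> C)"

definition symdiff :: "'a set \<Rightarrow> 'a set \<Rightarrow> 'a set" where
  "symdiff A B = (A - B) \<union> (B - A)"

text \<open>One step (processing vertex j) of the lexicographic algorithm;
  None represents "failure".\<close>
definition lex_step :: "(nat \<Rightarrow> nat \<Rightarrow> bool) \<Rightarrow> nat \<Rightarrow> nat set option \<Rightarrow> nat set option" where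
  "lex_step E j st = (case st of
      None \<Rightarrow> None
    | Some C \<Rightarrow>
        (if nbh E j \<inter> C = {} then Some (insert (Min (nbh E j)) C)
         else if (\<exists>k\<in>{1..<j}. nbh E k \<inter> C = nbh E j \<inter> C) then
           (let k = (LEAST k. k \<in> {1..<j} \<and> nbh E k \<inter> C = nbh E j \<inter> C) in
              if nbh E j \<noteq> nbh E k
              then Some (insert (Min (symdiff (nbh E j) (nbh E k))) C)
              else None)
         else Some C))"

definition lex_alg :: "nat \<Rightarrow> (nat \<Rightarrow> nat \<Rightarrow> bool) \<Rightarrow> nat set option" where
  "lex_alg n E = fold (lex_step E) [1..<n+1] (Some {})"

end

theory Submission
  imports Defs
begin

text \<open>Every vertex j has a code vertex in its neighbourhood, and every ambiguity arising
  at step j (an empty trace, or a trace shared with some earlier k, where j and k are not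
  twins) can be resolved inside M = {1..m}, because M identifies both j and k. The
  algorithm always adds the least resolving vertex, which therefore also lies in M.
  Hence by induction C_j \<subseteq> M, C_j identifies {1..j}, and the algorithm never fails.\<close>

definition identifies :: "(nat \<Rightarrow> nat \<Rightarrow> bool) \<Rightarrow> nat set \<Rightarrow> nat set \<Rightarrow> bool" where
  "identifies E C V \<longleftrightarrow>
     (\<forall>v\<in>V. nbh E v \<inter> C \<noteq> {}) \<and>
     (\<forall>v\<in>V. \<forall>w\<in>V. v \<noteq> w \<longrightarrow> nbh E v \<inter> C \<noteq> nbh E w \<inter> C)"

lemma identifying_code_iff_identifies:
  "identifying_code n E C \<longleftrightarrow> C \<subseteq> {1..n} \<and> identifies E C {1..n}"
  unfolding identifying_code_def identifies_def by blast

lemma identifies_mono: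
  "identifies E C V \<Longrightarrow> C \<subseteq> C' \<Longrightarrow> identifies E C' V"
  unfolding identifies_def by blast

lemma identifies_insert:
  assumes "identifies E C V"
    and "nbh E j \<inter> C \<noteq> {}"
    and "\<forall>w\<in>V. nbh E j \<inter> C \<noteq> nbh E w \<inter> C"
  shows "identifies E C (insert j V)"
  using assms unfolding identifies_def by (simp add: ball_simps) metis

lemma identifies_atLeastAtMost_Suc:
  assumes "identifies E C {1..<j}" "1 \<le> j"
    and "nbh E j \<inter> C \<noteq> {}"
    and "\<forall>w\<in>{1..<j}. nbh E j \<inter> C \<noteq> nbh E w \<inter> C"
  shows "identifies E C {1..j}"
proof -
  have "{1..j} = insert j {1..<j}" using \<open>1 \<le> j\<close> by auto
  then show ?thesis using identifies_insert assms by metis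
qed

lemma nbh_subset:
  assumes "simple_graph n E" "v \<in> {1..n}"
  shows "nbh E v \<subseteq> {1..n}"
  using assms unfolding simple_graph_def nbh_def by auto

lemma finite_nbh:
  assumes "simple_graph n E"
  shows "finite (nbh E v)"
proof -
  have "{w. E v w} \<subseteq> {1..n}" using assms unfolding simple_graph_def by auto
  then show ?thesis unfolding nbh_def by (simp add: finite_subset)
qed

lemma Min_in_atLeastAtMost:
  fixes S :: "nat set"
  assumes "finite S" "0 \<notin> S" "S \<inter> {1..m} \<noteq> {}"
  shows "Min S \<in> S \<inter> {1..m}"
proof -
  obtain y where y: "y \<in> S" "y \<le> m" using assms(3) by auto
  then have "Min S \<in> S" "Min S \<le> y" using assms(1) Min_in by auto
  then show ?thesis using assms(2) y(2) by (cases "Min S") auto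
qed

lemma lex_step_empty_trace:
  assumes sg: "simple_graph n E" and M: "identifying_code n E {1..m}"
    and j: "j \<in> {1..n}" and C: "C \<subseteq> {1..m}" "identifies E C {1..<j}"
    and empty: "nbh E j \<inter> C = {}"
  shows "\<exists>C'. lex_step E j (Some C) = Some C' \<and> C' \<subseteq> {1..m} \<and> identifies E C' {1..j}"
proof -
  define x where "x = Min (nbh E j)"
  have "nbh E j \<inter> {1..m} \<noteq> {}" using M j unfolding identifying_code_def by blast
  moreover have "0 \<notin> nbh E j" using nbh_subset[OF sg j] by auto
  ultimately have x: "x \<in> nbh E j \<inter> {1..m}"
    unfolding x_def using Min_in_atLeastAtMost[OF finite_nbh[OF sg]] by blast
  have "lex_step E j (Some C) = Some (insert x C)"
    using empty unfolding lex_step_def x_def by simp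
  moreover have "identifies E (insert x C) {1..j}"
  proof (rule identifies_atLeastAtMost_Suc)
    show "identifies E (insert x C) {1..<j}" using identifies_mono[OF C(2)] by blast
    show "\<forall>w\<in>{1..<j}. nbh E j \<inter> insert x C \<noteq> nbh E w \<inter> insert x C"
      \<comment> \<open>earlier vertices already meet C, whereas j does not\<close>
      using C(2) empty unfolding identifies_def by blast
    show "1 \<le> j" using j by simp
    show "nbh E j \<inter> insert x C \<noteq> {}" using x by blast
  qed
  ultimately show ?thesis using C(1) x by blast
qed

lemma lex_step_repeated_trace:
  assumes sg: "simple_graph n E" and tf: "twin_free n E" and M: "identifying_code n E {1..m}"
    and j: "j \<in> {1..n}" and C: "C \<subseteq> {1..m}" "identifies E C {1..<j}"
    and nonempty: "nbh E j \<inter> C \<noteq> {}"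
    and repeated: "\<exists>k\<in>{1..<j}. nbh E k \<inter> C = nbh E j \<inter> C"
  shows "\<exists>C'. lex_step E j (Some C) = Some C' \<and> C' \<subseteq> {1..m} \<and> identifies E C' {1..j}"
proof -
  define k where "k = (LEAST k. k \<in> {1..<j} \<and> nbh E k \<inter> C = nbh E j \<inter> C)"
  have k: "k \<in> {1..<j}" "nbh E k \<inter> C = nbh E j \<inter> C"
    using LeastI_ex[OF repeated[unfolded Bex_def]] unfolding k_def by blast+
  have kn: "k \<in> {1..n}" using k(1) j by auto
  have not_twins: "nbh E j \<noteq> nbh E k" using tf j kn k(1) unfolding twin_free_def by auto
  define S where "S = symdiff (nbh E j) (nbh E k)"
  define x where "x = Min S"
  have "nbh E j \<inter> {1..m} \<noteq> nbh E k \<inter> {1..m}"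
    using M j kn k(1) unfolding identifying_code_def by auto
  then have "S \<inter> {1..m} \<noteq> {}" unfolding S_def symdiff_def by blast
  moreover have "finite S" "0 \<notin> S"
    unfolding S_def symdiff_def
    using finite_nbh[OF sg] nbh_subset[OF sg j] nbh_subset[OF sg kn] by auto
  ultimately have x: "x \<in> S \<inter> {1..m}" unfolding x_def using Min_in_atLeastAtMost by blast
  have "lex_step E j (Some C) = Some (insert x C)"
    using nonempty repeated not_twins unfolding lex_step_def x_def S_def k_def
    by (simp add: Let_def)
  moreover have "identifies E (insert x C) {1..j}"
  proof (rule identifies_atLeastAtMost_Suc)
    show "identifies E (insert x C) {1..<j}" using identifies_mono[OF C(2)] by blast
    show "\<forall>w\<in>{1..<j}. nbh E j \<inter> insert x C \<noteq> nbh E w \<inter> insert x C"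
    proof
      fix w assume w: "w \<in> {1..<j}"
      show "nbh E j \<inter> insert x C \<noteq> nbh E w \<inter> insert x C"
      proof (cases "w = k")
        case True
        then show ?thesis using x unfolding S_def symdiff_def by blast
      next
        case False
        \<comment> \<open>w and k are separated by C, and j has the same trace as k\<close>
        then have "nbh E w \<inter> C \<noteq> nbh E k \<inter> C" using C(2) w k(1) unfolding identifies_def by blast
        then show ?thesis using k(2) by blast
      qed
    qed
  qed (use j nonempty in auto)
  ultimately show ?thesis using C(1) x by blast
qed

lemma lex_step_new_trace:
  assumes j: "1 \<le> j" and C: "C \<subseteq> {1..m}" "identifies E C {1..<j}"
    and nonempty: "nbh E j \<inter> C \<noteq> {}"
    and new: "\<not> (\<exists>k\<in>{1..<j}. nbh E k \<inter> C = nbh E j \<inter> C)"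
  shows "\<exists>C'. lex_step E j (Some C) = Some C' \<and> C' \<subseteq> {1..m} \<and> identifies E C' {1..j}"
proof -
  have "lex_step E j (Some C) = Some C" using nonempty new unfolding lex_step_def by simp
  moreover have "identifies E C {1..j}"
    using identifies_atLeastAtMost_Suc[OF C(2) j nonempty] new by metis
  ultimately show ?thesis using C(1) by blast
qed

lemma lex_step_preserves_invariant:
  assumes "simple_graph n E" "twin_free n E" "identifying_code n E {1..m}"
    and j: "j \<in> {1..n}" and C: "C \<subseteq> {1..m}" "identifies E C {1..<j}"
  shows "\<exists>C'. lex_step E j (Some C) = Some C' \<and> C' \<subseteq> {1..m} \<and> identifies E C' {1..j}"
proof (cases "nbh E j \<inter> C = {}")
  case True
  then show ?thesis using lex_step_empty_trace assms by blast
next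
  case False
  then show ?thesis
    using lex_step_repeated_trace[OF assms] lex_step_new_trace[OF _ C] j by auto
qed

lemma lex_alg_prefix_invariant:
  assumes "simple_graph n E" "twin_free n E" "identifying_code n E {1..m}" "j \<le> n"
  shows "\<exists>C. fold (lex_step E) [1..<j+1] (Some {}) = Some C \<and> C \<subseteq> {1..m} \<and>
             identifies E C {1..j}"
  using \<open>j \<le> n\<close>
proof (induction j)
  case 0
  then show ?case by (simp add: identifies_def)
next
  case (Suc j)
  then obtain C where C: "fold (lex_step E) [1..<j+1] (Some {}) = Some C"
      "C \<subseteq> {1..m}" "identifies E C {1..j}"
    by auto
  have "{1..j} = {1..<Suc j}" by auto
  then show ?case
    using C lex_step_preserves_invariant[OF assms(1-3), of "Suc j" C] Suc.prems by simp
qed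

theorem proposition2:
  fixes n m :: nat and E :: "nat \<Rightarrow> nat \<Rightarrow> bool"
  assumes "simple_graph n E"
    and "twin_free n E"
    and "1 \<le> m" and "m \<le> n"
    and "identifying_code n E {1..m}"
  shows "\<exists>C. lex_alg n E = Some C \<and> identifying_code n E C \<and> C \<subseteq> {1..m}"
proof -
  obtain C where C: "lex_alg n E = Some C" "C \<subseteq> {1..m}" "identifies E C {1..n}"
    using lex_alg_prefix_invariant[OF assms(1,2,5) order_refl] unfolding lex_alg_def by blast
  then have "identifying_code n E C"
    using \<open>m \<le> n\<close> unfolding identifying_code_iff_identifies by auto
  then show ?thesis using C by blast
qed

end
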